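(* Let $\mathcal{A}$ and $\mathcal{B}$ be hyperplane arrangements in a finite-dimensional $\mathbb{K}$-vector space $V$. Let $\varnothing\neq S\subseteq\mathcal{A}$ and $\varnothing\neq T\subseteq\mathcal{B}$ with $\langle S\rangle_{\mathcal{A}}=\mathcal{A}$ and $\langle T\rangle_{\mathcal{B}}=\mathcal{B}$. Suppose $\psi:L(\mathcal{A})\to L(\mathcal{B})$ is a poset isomorphism and $\varphi\in\mathrm{GL}(V)$ satisfy $\psi(S)=\varphi(S)=T$ and $\psi(H)=\varphi(H)$ for all $H\in S$. Then $\varphi(\mathcal{A})=\mathcal{B}$, i.e. $\{\varphi(H)\mid H\in\mathcal{A}\}=\mathcal{B}$.
   Context: For an arrangement $\mathcal{A}$, $L(\mathcal{A})$ is the set of all intersections of subsets of $\mathcal{A}$, ordered by reverse inclusion. For $\varnothing\neq S\subseteq\mathcal{A}$ set $\mathrm{Gen}_0(\mathcal{A},S):=S$ and inductively $\mathrm{Gen}_{i+1}(\mathcal{A},S):=\{H\in\mathcal{A}\mid \exists\, J\subseteq L(\mathrm{Gen}_i(\mathcal{A},S)) \text{ with } H=\sum_{X\in J}X\}$ (sum of subspaces). The subarrangement generated by $S$ is $\langle S\rangle_{\mathcal{A}}:=\bigcup_{i\ge0}\mathrm{Gen}_i(\mathcal{A},S)$; $S$ generates $\mathcal{A}$ if $\langle S\rangle_{\mathcal{A}}=\mathcal{A}$. *)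

theory Defs
  imports Complex_Main
begin

text \<open>Hyperplanes are linear subspaces of codimension one (central arrangements,
as the subspace sums in the generation process require).\<close>

definition is_hyperplane :: "('k::field \<Rightarrow> 'v::ab_group_add \<Rightarrow> 'v) \<Rightarrow> 'v set \<Rightarrow> bool" where
  "is_hyperplane scale H \<longleftrightarrow>
     Modules.module.subspace scale H \<and> Vector_Spaces.vector_space.dim scale H + 1 = Vector_Spaces.vector_space.dim scale (UNIV :: 'v set)"

definition is_arrangement :: "('k::field \<Rightarrow> 'v::ab_group_add \<Rightarrow> 'v) \<Rightarrow> 'v set set \<Rightarrow> bool" where
  "is_arrangement scale A \<longleftrightarrow> finite A \<and> (\<forall>H\<in>A. is_hyperplane scale H)"

text \<open>Intersection lattice: all intersections of subsets (empty intersection = V).\<close>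
definition intersection_lattice :: "'v set set \<Rightarrow> 'v set set" where
  "intersection_lattice A = {\<Inter> X | X. X \<subseteq> A}"

definition subspace_sum :: "('k::field \<Rightarrow> 'v::ab_group_add \<Rightarrow> 'v) \<Rightarrow> 'v set set \<Rightarrow> 'v set" where
  "subspace_sum scale J = Modules.module.span scale (\<Union> J)"

primrec Gen :: "('k::field \<Rightarrow> 'v::ab_group_add \<Rightarrow> 'v) \<Rightarrow> 'v set set \<Rightarrow> 'v set set \<Rightarrow> nat \<Rightarrow> 'v set set" where
  "Gen scale A S 0 = S"
| "Gen scale A S (Suc i) =
     {H \<in> A. \<exists>J. J \<subseteq> intersection_lattice (Gen scale A S i) \<and> H = subspace_sum scale J}"

definition generated :: "('k::field \<Rightarrow> 'v::ab_group_add \<Rightarrow> 'v) \<Rightarrow> 'v set set \<Rightarrow> 'v set set \<Rightarrow> 'v set set" where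
  "generated scale A S = (\<Union>i. Gen scale A S i)"

text \<open>Poset isomorphism L(A) \<rightarrow> L(B) (reverse inclusion on both sides,
equivalently inclusion on both sides).\<close>
definition poset_iso :: "('v set \<Rightarrow> 'v set) \<Rightarrow> 'v set set \<Rightarrow> 'v set set \<Rightarrow> bool" where
  "poset_iso \<psi> A B \<longleftrightarrow> bij_betw \<psi> (intersection_lattice A) (intersection_lattice B) \<and>
     (\<forall>X\<in>intersection_lattice A. \<forall>Y\<in>intersection_lattice A. X \<subseteq> Y \<longleftrightarrow> \<psi> X \<subseteq> \<psi> Y)"

end

theory Submission
  imports Defs
begin

text \<open>By induction along the generation process, \<psi> and \<phi> agree on every
hyperplane of \<open>\<langle>S\<rangle> = A\<close>: a poset isomorphism preserves intersections, so they
agree on \<open>L(Gen\<^sub>i)\<close>; a hyperplane H that is a sum of such flats is mapped by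
\<phi> into the flat \<psi> H, which is proper, and a proper subspace containing the
hyperplane \<phi> H equals it. Each \<phi> H then lies in a flat of L(B) that is an
intersection of hyperplanes of B, hence is one of them. Applying this also
to the inverses \<open>\<psi>\<^sup>-\<^sup>1\<close> and \<open>\<phi>\<^sup>-\<^sup>1\<close> gives \<phi>(A) = B.\<close>

lemma intersection_lattice_iff:
  "Z \<in> intersection_lattice A \<longleftrightarrow> Z = \<Inter>{H\<in>A. Z \<subseteq> H}"
  unfolding intersection_lattice_def by blast

lemma Inter_in_intersection_lattice:
  assumes "M \<subseteq> intersection_lattice A"
  shows "\<Inter>M \<in> intersection_lattice A"
proof -
  have "\<Inter>{H\<in>A. \<Inter>M \<subseteq> H} \<subseteq> X" if "X \<in> M" for X
  proof -
    have "X \<in> intersection_lattice A" using assms that by blast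
    hence "X = \<Inter>{H\<in>A. X \<subseteq> H}" by (rule intersection_lattice_iff[THEN iffD1])
    moreover have "\<Inter>{H\<in>A. \<Inter>M \<subseteq> H} \<subseteq> \<Inter>{H\<in>A. X \<subseteq> H}" using that by blast
    ultimately show ?thesis by simp
  qed
  hence "\<Inter>M = \<Inter>{H\<in>A. \<Inter>M \<subseteq> H}" by blast
  thus ?thesis by (rule intersection_lattice_iff[THEN iffD2])
qed

lemma subset_intersection_lattice: "A \<subseteq> intersection_lattice A"
  unfolding intersection_lattice_def by blast

lemma UNIV_in_intersection_lattice: "UNIV \<in> intersection_lattice A"
  unfolding intersection_lattice_def by blast

lemma intersection_latticeE:
  "X \<in> intersection_lattice A \<Longrightarrow> (\<And>Y. Y \<subseteq> A \<Longrightarrow> X = \<Inter>Y \<Longrightarrow> P) \<Longrightarrow> P"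
  unfolding intersection_lattice_def by blast

lemma intersection_lattice_mono: "A \<subseteq> B \<Longrightarrow> intersection_lattice A \<subseteq> intersection_lattice B"
  unfolding intersection_lattice_def by auto

lemma poset_iso_subset_iff:
  "poset_iso \<psi> A B \<Longrightarrow> X \<in> intersection_lattice A \<Longrightarrow> Y \<in> intersection_lattice A \<Longrightarrow>
    \<psi> X \<subseteq> \<psi> Y \<longleftrightarrow> X \<subseteq> Y"
  by (simp add: poset_iso_def)

lemma poset_iso_in_lattice:
  "poset_iso \<psi> A B \<Longrightarrow> X \<in> intersection_lattice A \<Longrightarrow> \<psi> X \<in> intersection_lattice B"
  by (auto simp: poset_iso_def bij_betw_def)

lemma poset_iso_Inter:
  assumes iso: "poset_iso \<psi> A B" and M: "M \<subseteq> intersection_lattice A"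
  shows "\<psi> (\<Inter>M) = \<Inter>(\<psi> ` M)"
proof
  have MI: "\<Inter>M \<in> intersection_lattice A" using M by (rule Inter_in_intersection_lattice)
  have "\<psi> (\<Inter>M) \<subseteq> \<psi> X" if "X \<in> M" for X
    using that M poset_iso_subset_iff[OF iso MI, of X] by blast
  then show "\<psi> (\<Inter>M) \<subseteq> \<Inter>(\<psi> ` M)" by blast
  have "\<psi> ` M \<subseteq> intersection_lattice B" using M poset_iso_in_lattice[OF iso] by blast
  hence "\<Inter>(\<psi> ` M) \<in> intersection_lattice B" by (rule Inter_in_intersection_lattice)
  moreover have "intersection_lattice B = \<psi> ` intersection_lattice A"
    using iso by (simp add: poset_iso_def bij_betw_def)
  ultimately obtain W where W: "W \<in> intersection_lattice A" "\<psi> W = \<Inter>(\<psi> ` M)" by auto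
  have "W \<subseteq> X" if "X \<in> M" for X
  proof -
    have "X \<in> intersection_lattice A" using that M by blast
    moreover have "\<psi> W \<subseteq> \<psi> X" using W(2) that by blast
    ultimately show ?thesis using poset_iso_subset_iff[OF iso W(1)] by blast
  qed
  hence "\<psi> W \<subseteq> \<psi> (\<Inter>M)" using poset_iso_subset_iff[OF iso W(1) MI] by blast
  thus "\<Inter>(\<psi> ` M) \<subseteq> \<psi> (\<Inter>M)" using W(2) by simp
qed

lemma poset_iso_UNIV: "poset_iso \<psi> A B \<Longrightarrow> \<psi> UNIV = UNIV"
  using poset_iso_Inter[of \<psi> A B "{}"] by simp

lemma poset_iso_neq_UNIV:
  assumes "poset_iso \<psi> A B" "X \<in> intersection_lattice A" "X \<noteq> UNIV"
  shows "\<psi> X \<noteq> UNIV"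
  using assms poset_iso_UNIV[OF assms(1)] UNIV_in_intersection_lattice
  unfolding poset_iso_def bij_betw_def inj_on_def by metis

lemma poset_iso_inv_into:
  assumes "poset_iso \<psi> A B"
  shows "poset_iso (inv_into (intersection_lattice A) \<psi>) B A"
proof -
  have bij: "bij_betw \<psi> (intersection_lattice A) (intersection_lattice B)"
    using assms unfolding poset_iso_def by blast
  have "X \<subseteq> Y \<longleftrightarrow> inv_into (intersection_lattice A) \<psi> X \<subseteq> inv_into (intersection_lattice A) \<psi> Y"
    if "X \<in> intersection_lattice B" "Y \<in> intersection_lattice B" for X Y
    using that assms bij_betw_inv_into_right[OF bij] bij_betw_apply[OF bij_betw_inv_into[OF bij]]
    unfolding poset_iso_def by metis
  thus ?thesis
    using bij_betw_inv_into[OF bij] unfolding poset_iso_def by blast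
qed

lemma poset_iso_agrees_Inter:
  assumes "poset_iso \<psi> A B" "bij \<phi>"
    and "Y \<subseteq> intersection_lattice A" and "\<forall>X\<in>Y. \<psi> X = \<phi> ` X"
  shows "\<psi> (\<Inter>Y) = \<phi> ` \<Inter>Y"
proof -
  have "\<psi> (\<Inter>Y) = \<Inter>(\<psi> ` Y)" using poset_iso_Inter assms(1,3) .
  also have "\<dots> = \<Inter>((\<lambda>X. \<phi> ` X) ` Y)" using assms(4) by simp
  also have "\<dots> = \<phi> ` \<Inter>Y" using bij_image_INT[OF assms(2), of id Y] by simp
  finally show ?thesis .
qed

lemma poset_iso_inv_into_agrees:
  assumes iso: "poset_iso \<psi> A B" and bij: "bij \<phi>"
    and S: "S \<subseteq> A" "\<forall>H\<in>S. \<psi> H = \<phi> ` H"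
  shows "\<forall>K\<in>\<psi> ` S. inv_into (intersection_lattice A) \<psi> K = inv \<phi> ` K"
proof
  fix K assume "K \<in> \<psi> ` S"
  then obtain H where H: "H \<in> S" "K = \<psi> H" by blast
  have "inj_on \<psi> (intersection_lattice A)" using iso by (simp add: poset_iso_def bij_betw_def)
  moreover have "H \<in> intersection_lattice A" using H(1) S(1) subset_intersection_lattice by blast
  ultimately have "inv_into (intersection_lattice A) \<psi> K = H" using H(2) by simp
  moreover have "inv \<phi> ` K = H"
    using H S(2) image_inv_f_f[OF bij_is_inj[OF bij]] by simp
  ultimately show "inv_into (intersection_lattice A) \<psi> K = inv \<phi> ` K" by simp
qed

lemma Gen_subset: "S \<subseteq> A \<Longrightarrow> Gen scale A S i \<subseteq> A"
  by (cases i) auto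

context finite_dimensional_vector_space
begin

lemma hyperplane_neq_UNIV: "is_hyperplane scale H \<Longrightarrow> H \<noteq> UNIV"
  unfolding is_hyperplane_def by auto

lemma hyperplane_maximal:
  assumes "is_hyperplane scale H" "subspace W" "H \<subseteq> W" "W \<noteq> UNIV"
  shows "W = H"
proof (rule ccontr)
  assume "W \<noteq> H"
  moreover have "subspace H" using assms(1) unfolding is_hyperplane_def by simp
  ultimately have "span H \<subset> span W" using assms(2,3) by (simp add: span_eq_iff[THEN iffD2])
  hence "dim H < dim W" by (rule dim_psubset)
  moreover have "dim W \<le> dim (UNIV :: 'b set)" by (rule dim_subset) simp
  ultimately have "dim W = dimension"
    using assms(1) unfolding is_hyperplane_def by (simp add: dimension_def)
  hence "span W = UNIV" using dim_eq_full by blast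
  thus False using assms(2,4) by (simp add: span_eq_iff[THEN iffD2])
qed

lemma hyperplane_maximal_bij_image:
  assumes "Vector_Spaces.linear scale scale \<phi>" "bij \<phi>" "is_hyperplane scale H"
    and "subspace W" "\<phi> ` H \<subseteq> W" "W \<noteq> UNIV"
  shows "W = \<phi> ` H"
proof -
  interpret module_hom scale scale \<phi> using assms(1) by (simp add: linear_iff_module_hom)
  have "subspace (\<phi> -` W)" using subspace_vimage assms(4) .
  moreover have "\<phi> -` W \<noteq> UNIV"
  proof
    assume "\<phi> -` W = UNIV"
    hence "range \<phi> \<subseteq> W" by blast
    thus False using assms(2,6) by (auto simp: bij_is_surj)
  qed
  ultimately have "\<phi> -` W = H" using hyperplane_maximal assms(3,5) by blast
  thus ?thesis using assms(2) by (metis bij_is_surj surj_image_vimage_eq)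
qed

lemma intersection_lattice_subspace:
  assumes "is_arrangement scale A" "X \<in> intersection_lattice A"
  shows "subspace X"
proof -
  obtain Y where "Y \<subseteq> A" "X = \<Inter>Y" using assms(2) by (rule intersection_latticeE)
  moreover have "\<forall>H\<in>A. subspace H" using assms(1) by (simp add: is_arrangement_def is_hyperplane_def)
  ultimately show ?thesis using subspace_Inter[of Y] by blast
qed

lemma poset_iso_agrees_span:
  assumes arrB: "is_arrangement scale B" and iso: "poset_iso \<psi> A B"
    and lin: "Vector_Spaces.linear scale scale \<phi>" and bij: "bij \<phi>"
    and H: "H \<in> A" "is_hyperplane scale H" "H = span (\<Union>J)"
    and J: "J \<subseteq> intersection_lattice A" "\<forall>X\<in>J. \<psi> X = \<phi> ` X"
  shows "\<psi> H = \<phi> ` H"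
proof -
  interpret module_hom scale scale \<phi> using lin by (simp add: linear_iff_module_hom)
  have HL: "H \<in> intersection_lattice A" using H(1) subset_intersection_lattice by blast
  have \<psi>L: "\<psi> H \<in> intersection_lattice B" using poset_iso_in_lattice[OF iso HL] .
  have "\<phi> ` X \<subseteq> \<psi> H" if "X \<in> J" for X
  proof -
    have "X \<subseteq> H" unfolding H(3) using that span_superset by blast
    moreover have "X \<in> intersection_lattice A" using J(1) that by blast
    ultimately have "\<psi> X \<subseteq> \<psi> H" using poset_iso_subset_iff[OF iso _ HL] by blast
    thus ?thesis using J(2) that by simp
  qed
  hence "\<phi> ` \<Union>J \<subseteq> \<psi> H" by blast
  hence "span (\<phi> ` \<Union>J) \<subseteq> \<psi> H"
    by (rule span_minimal) (rule intersection_lattice_subspace[OF arrB \<psi>L])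
  moreover have "\<phi> ` H = span (\<phi> ` \<Union>J)" unfolding H(3) by (rule span_image[symmetric])
  ultimately have "\<phi> ` H \<subseteq> \<psi> H" by simp
  moreover have "\<psi> H \<noteq> UNIV"
    using poset_iso_neq_UNIV[OF iso HL] hyperplane_neq_UNIV[OF H(2)] .
  ultimately show ?thesis
    by (rule hyperplane_maximal_bij_image[OF lin bij H(2) intersection_lattice_subspace[OF arrB \<psi>L]])
qed

lemma poset_iso_agrees_Gen:
  assumes arrA: "is_arrangement scale A" and arrB: "is_arrangement scale B"
    and iso: "poset_iso \<psi> A B" and lin: "Vector_Spaces.linear scale scale \<phi>" and bij: "bij \<phi>"
    and S: "S \<subseteq> A" "\<forall>H\<in>S. \<psi> H = \<phi> ` H"
  shows "\<forall>H\<in>Gen scale A S i. \<psi> H = \<phi> ` H"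
proof (induction i)
  case 0
  then show ?case using S by simp
next
  case (Suc i)
  have flats: "\<psi> X = \<phi> ` X" if X: "X \<in> intersection_lattice (Gen scale A S i)" for X
  proof -
    obtain Y where Y: "Y \<subseteq> Gen scale A S i" "X = \<Inter>Y"
      using X by (rule intersection_latticeE)
    have "Y \<subseteq> intersection_lattice A"
      using Y(1) Gen_subset[OF S(1)] subset_intersection_lattice by blast
    moreover have "\<forall>Z\<in>Y. \<psi> Z = \<phi> ` Z" using Y(1) Suc.IH by blast
    ultimately show ?thesis using poset_iso_agrees_Inter[OF iso bij] Y(2) by simp
  qed
  have lattice: "intersection_lattice (Gen scale A S i) \<subseteq> intersection_lattice A"
    using Gen_subset[OF S(1)] by (rule intersection_lattice_mono)
  show ?case
  proof
    fix H assume "H \<in> Gen scale A S (Suc i)"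
    then obtain J where H: "H \<in> A" "H = span (\<Union>J)"
      and J: "J \<subseteq> intersection_lattice (Gen scale A S i)"
      by (auto simp: subspace_sum_def)
    have "is_hyperplane scale H" using H(1) arrA by (simp add: is_arrangement_def)
    moreover have "J \<subseteq> intersection_lattice A" using J lattice by (rule order_trans)
    moreover have "\<forall>X\<in>J. \<psi> X = \<phi> ` X" using J flats by (simp add: subset_iff)
    ultimately show "\<psi> H = \<phi> ` H"
      using poset_iso_agrees_span[OF arrB iso lin bij H(1) _ H(2)] by blast
  qed
qed

lemma image_hyperplane_mem:
  assumes arrB: "is_arrangement scale B" and iso: "poset_iso \<psi> A B"
    and lin: "Vector_Spaces.linear scale scale \<phi>" and bij: "bij \<phi>"
    and H: "H \<in> A" "is_hyperplane scale H" "\<psi> H = \<phi> ` H"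
  shows "\<phi> ` H \<in> B"
proof -
  have "H \<in> intersection_lattice A" using H(1) subset_intersection_lattice by blast
  hence "\<phi> ` H \<in> intersection_lattice B" using poset_iso_in_lattice[OF iso] H(3) by metis
  then obtain X where X: "X \<subseteq> B" "\<phi> ` H = \<Inter>X" by (rule intersection_latticeE)
  have "\<phi> ` H \<noteq> \<phi> ` UNIV"
    using hyperplane_neq_UNIV[OF H(2)] bij by (simp add: bij_is_inj inj_image_eq_iff)
  hence "X \<noteq> {}" using X(2) bij by (auto simp: bij_is_surj)
  then obtain K where K: "K \<in> X" by blast
  have hyp: "is_hyperplane scale K" using arrB X(1) K by (auto simp: is_arrangement_def)
  have "K = \<phi> ` H"
  proof (rule hyperplane_maximal_bij_image[OF lin bij H(2)])
    show "subspace K" using hyp by (simp add: is_hyperplane_def)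
    show "\<phi> ` H \<subseteq> K" using X(2) K by blast
    show "K \<noteq> UNIV" using hyp by (rule hyperplane_neq_UNIV)
  qed
  thus ?thesis using K X(1) by blast
qed

lemma image_generated_arrangement_subset:
  assumes arrA: "is_arrangement scale A" and arrB: "is_arrangement scale B"
    and S: "S \<subseteq> A" "generated scale A S = A"
    and iso: "poset_iso \<psi> A B" and lin: "Vector_Spaces.linear scale scale \<phi>" and bij: "bij \<phi>"
    and agree: "\<forall>H\<in>S. \<psi> H = \<phi> ` H"
  shows "(\<lambda>H. \<phi> ` H) ` A \<subseteq> B"
proof
  fix K assume "K \<in> (\<lambda>H. \<phi> ` H) ` A"
  then obtain H where H: "H \<in> A" "K = \<phi> ` H" by blast
  obtain i where "H \<in> Gen scale A S i" using H(1) S(2) unfolding generated_def by blast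
  hence "\<psi> H = \<phi> ` H" using poset_iso_agrees_Gen[OF arrA arrB iso lin bij S(1) agree] by blast
  moreover have "is_hyperplane scale H" using H(1) arrA by (simp add: is_arrangement_def)
  ultimately show "K \<in> B" using image_hyperplane_mem[OF arrB iso lin bij H(1)] H(2) by simp
qed

end

theorem mainTheorem2:
  fixes scale :: "'k::field \<Rightarrow> 'v::ab_group_add \<Rightarrow> 'v"
    and Basis :: "'v set"
    and A B S T :: "'v set set"
    and \<psi> :: "'v set \<Rightarrow> 'v set"
    and \<phi> :: "'v \<Rightarrow> 'v"
  assumes "finite_dimensional_vector_space scale Basis"
    and "is_arrangement scale A" and "is_arrangement scale B"
    and "S \<noteq> {}" and "S \<subseteq> A" and "T \<noteq> {}" and "T \<subseteq> B"
    and "generated scale A S = A" and "generated scale B T = B"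
    and "poset_iso \<psi> A B"
    and "Vector_Spaces.linear scale scale \<phi>" and "bij \<phi>"
    and "\<psi> ` S = T" and "(\<lambda>H. \<phi> ` H) ` S = T"
    and "\<forall>H\<in>S. \<psi> H = \<phi> ` H"
  shows "(\<lambda>H. \<phi> ` H) ` A = B"
proof -
  interpret finite_dimensional_vector_space scale Basis by fact
  have fwd: "(\<lambda>H. \<phi> ` H) ` A \<subseteq> B"
    using image_generated_arrangement_subset assms(2,3,5,8,10-12,15) .
  have bwd: "(\<lambda>K. inv \<phi> ` K) ` B \<subseteq> A"
    using image_generated_arrangement_subset[OF assms(3,2,7,9) poset_iso_inv_into[OF assms(10)]
        inj_linear_imp_inv_linear[OF assms(11) bij_is_inj[OF assms(12)]]
        bij_imp_bij_inv[OF assms(12)]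
        poset_iso_inv_into_agrees[OF assms(10,12,5,15), unfolded assms(13)]] .
  have "B \<subseteq> (\<lambda>H. \<phi> ` H) ` A"
  proof
    fix K assume "K \<in> B"
    hence "inv \<phi> ` K \<in> A" using bwd by blast
    moreover have "K = \<phi> ` inv \<phi> ` K"
      using assms(12) by (simp add: bij_is_surj image_comp surj_f_inv_f)
    ultimately show "K \<in> (\<lambda>H. \<phi> ` H) ` A" by (rule rev_image_eqI)
  qed
  with fwd show ?thesis by (rule subset_antisym)
qed

end
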